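(* Let $(A,\succ,\prec)$ be a finite-dimensional dendriform algebra with associated product $*$, and let $r\in A\otimes A$ be a symmetric solution of the $D$-equation $r_{12}*r_{13}=r_{13}\prec r_{23}+r_{23}\succ r_{12}$. Let $T_r$ be $A\oplus A^*$ with the product $x\star y=x*y$, $a^*\star b^*=R_\prec^*(r(a^* ))b^*+L_\succ^*(r(b^* ))a^*$, $x\star a^*=x*r(a^* )-r(R_\prec^*(x)a^* )+R_\prec^*(x)a^*$, $a^*\star x=r(a^* )*x-r(L_\succ^*(x)a^* )+L_\succ^*(x)a^*$ ($x,y\in A$, $a^*,b^*\in A^*$), and let $A\ltimes_{R_\prec^*,L_\succ^*}A^*$ be $A\oplus A^*$ with product $(x+a^* )(y+b^* )=x*y+R_\prec^*(x)b^*+L_\succ^*(y)a^*$. Let $\omega(x+a^*,y+b^* )=-\langle x,b^*\rangle+\langle a^*,y\rangle$. Then both are associative algebras on which $\omega$ is a Connes cocycle, and there exists an isomorphism of associative algebras $\varphi:A\ltimes_{R_\prec^*,L_\succ^*}A^*\to T_r$ with $\omega(\varphi(u),\varphi(v))=\omega(u,v)$ for all $u,v$.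
   Context: A dendriform algebra is a vector space with bilinear products $\prec,\succ$ such that, writing $x*y=x\prec y+x\succ y$: $(x\prec y)\prec z=x\prec(y*z)$, $(x\succ y)\prec z=x\succ(y\prec z)$, $x\succ(y\succ z)=(x*y)\succ z$. $\langle L_\succ^*(x)a^*,y\rangle=\langle a^*,x\succ y\rangle$, $\langle R_\prec^*(x)a^*,y\rangle=\langle a^*,y\prec x\rangle$. Symmetric: $\sigma(r)=r$, $\sigma(u\otimes v)=v\otimes u$. $r$ is regarded as a map $A^*\to A$ by $\langle u^*\otimes v^*,r\rangle=\langle u^*,r(v^* )\rangle$. For $r=\sum_i x_i\otimes y_i$: $r_{12}*r_{13}=\sum_{i,j}x_i*x_j\otimes y_i\otimes y_j$, $r_{13}\prec r_{23}=\sum_{i,j}x_i\otimes x_j\otimes y_i\prec y_j$, $r_{23}\succ r_{12}=\sum_{i,j}x_j\otimes x_i\succ y_j\otimes y_i$. A Connes cocycle on an associative algebra is an antisymmetric bilinear form $\omega$ with $\omega(uv,w)+\omega(vw,u)+\omega(wu,v)=0$. *)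

theory Defs
  imports Main
begin

text \<open>A finite-dimensional vector space over a field 'k is modelled as the coordinate
space 'n \<Rightarrow> 'k for a finite index type 'n (basis vectors bv i).  The dual space A*
is also 'n \<Rightarrow> 'k, with the pairing below against the dual basis.  Bilinear products
are given by structure constants, so they are bilinear by construction.\<close>

definition bv :: "'n \<Rightarrow> 'n \<Rightarrow> 'k::field" where
  "bv j = (\<lambda>i. if i = j then 1 else 0)"

definition pairing :: "('n::finite \<Rightarrow> 'k::field) \<Rightarrow> ('n \<Rightarrow> 'k) \<Rightarrow> 'k" where
  "pairing a x = (\<Sum>i\<in>UNIV. a i * x i)"

definition bmul :: "('n::finite \<Rightarrow> 'n \<Rightarrow> 'n \<Rightarrow> 'k::field) \<Rightarrow> ('n \<Rightarrow> 'k) \<Rightarrow> ('n \<Rightarrow> 'k) \<Rightarrow> ('n \<Rightarrow> 'k)" where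
  "bmul P x y = (\<lambda>k. \<Sum>i\<in>UNIV. \<Sum>j\<in>UNIV. x i * y j * P i j k)"

definition amul :: "('n::finite \<Rightarrow> 'n \<Rightarrow> 'n \<Rightarrow> 'k::field) \<Rightarrow> ('n \<Rightarrow> 'n \<Rightarrow> 'n \<Rightarrow> 'k)
    \<Rightarrow> ('n \<Rightarrow> 'k) \<Rightarrow> ('n \<Rightarrow> 'k) \<Rightarrow> ('n \<Rightarrow> 'k)" where
  "amul Pr Su x y = (\<lambda>k. bmul Pr x y k + bmul Su x y k)"

definition dendriform :: "('n::finite \<Rightarrow> 'n \<Rightarrow> 'n \<Rightarrow> 'k::field) \<Rightarrow> ('n \<Rightarrow> 'n \<Rightarrow> 'n \<Rightarrow> 'k) \<Rightarrow> bool" where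
  "dendriform Pr Su \<longleftrightarrow> (\<forall>x y z.
      bmul Pr (bmul Pr x y) z = bmul Pr x (amul Pr Su y z) \<and>
      bmul Pr (bmul Su x y) z = bmul Su x (bmul Pr y z) \<and>
      bmul Su x (bmul Su y z) = bmul Su (amul Pr Su x y) z)"

text \<open>r = sum_{a,b} r a b (e_a \<otimes> e_b) in A \<otimes> A\<close>
definition symmetric_tensor :: "('n \<Rightarrow> 'n \<Rightarrow> 'k) \<Rightarrow> bool" where
  "symmetric_tensor r \<longleftrightarrow> (\<forall>a b. r a b = r b a)"

text \<open>r regarded as map A* \<rightarrow> A via <u* \<otimes> v*, r> = <u*, r(v*)>\<close>
definition rmap :: "('n::finite \<Rightarrow> 'n \<Rightarrow> 'k::field) \<Rightarrow> ('n \<Rightarrow> 'k) \<Rightarrow> ('n \<Rightarrow> 'k)" where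
  "rmap r b = (\<lambda>i. \<Sum>j\<in>UNIV. r i j * b j)"

text \<open>coefficients (at e_p \<otimes> e_q \<otimes> e_s) of the three tensors in the D-equation\<close>
definition r12_mul_r13 where
  "r12_mul_r13 Pr Su r p q s = (\<Sum>a\<in>UNIV. \<Sum>c\<in>UNIV. r a q * r c s * amul Pr Su (bv a) (bv c) p)"
definition r13_prec_r23 where
  "r13_prec_r23 Pr r p q s = (\<Sum>b\<in>UNIV. \<Sum>d\<in>UNIV. r p b * r q d * bmul Pr (bv b) (bv d) s)"
definition r23_succ_r12 where
  "r23_succ_r12 Su r p q s = (\<Sum>a\<in>UNIV. \<Sum>d\<in>UNIV. r a s * r p d * bmul Su (bv a) (bv d) q)"

definition D_equation :: "('n::finite \<Rightarrow> 'n \<Rightarrow> 'n \<Rightarrow> 'k::field) \<Rightarrow> ('n \<Rightarrow> 'n \<Rightarrow> 'n \<Rightarrow> 'k)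
    \<Rightarrow> ('n \<Rightarrow> 'n \<Rightarrow> 'k) \<Rightarrow> bool" where
  "D_equation Pr Su r \<longleftrightarrow> (\<forall>p q s.
      r12_mul_r13 Pr Su r p q s = r13_prec_r23 Pr r p q s + r23_succ_r12 Su r p q s)"

text \<open><R_prec^*(x) a*, y> = <a*, y \<prec> x>,  <L_succ^*(x) a*, y> = <a*, x \<succ> y>\<close>
definition Rstar :: "('n::finite \<Rightarrow> 'n \<Rightarrow> 'n \<Rightarrow> 'k::field) \<Rightarrow> ('n \<Rightarrow> 'k) \<Rightarrow> ('n \<Rightarrow> 'k) \<Rightarrow> ('n \<Rightarrow> 'k)" where
  "Rstar Pr x a = (\<lambda>j. pairing a (bmul Pr (bv j) x))"
definition Lstar :: "('n::finite \<Rightarrow> 'n \<Rightarrow> 'n \<Rightarrow> 'k::field) \<Rightarrow> ('n \<Rightarrow> 'k) \<Rightarrow> ('n \<Rightarrow> 'k) \<Rightarrow> ('n \<Rightarrow> 'k)" where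
  "Lstar Su x a = (\<lambda>j. pairing a (bmul Su x (bv j)))"

type_synonym ('n,'k) dsum = "('n \<Rightarrow> 'k) \<times> ('n \<Rightarrow> 'k)"

definition padd :: "('n,'k::field) dsum \<Rightarrow> ('n,'k) dsum \<Rightarrow> ('n,'k) dsum" where
  "padd u v = ((\<lambda>i. fst u i + fst v i), (\<lambda>i. snd u i + snd v i))"
definition pscale :: "'k::field \<Rightarrow> ('n,'k) dsum \<Rightarrow> ('n,'k) dsum" where
  "pscale c u = ((\<lambda>i. c * fst u i), (\<lambda>i. c * snd u i))"

definition sd_mul :: "('n::finite \<Rightarrow> 'n \<Rightarrow> 'n \<Rightarrow> 'k::field) \<Rightarrow> ('n \<Rightarrow> 'n \<Rightarrow> 'n \<Rightarrow> 'k)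
    \<Rightarrow> ('n,'k) dsum \<Rightarrow> ('n,'k) dsum \<Rightarrow> ('n,'k) dsum" where
  "sd_mul Pr Su u v = (case u of (x, a) \<Rightarrow> case v of (y, b) \<Rightarrow>
      (amul Pr Su x y, (\<lambda>i. Rstar Pr x b i + Lstar Su y a i)))"

text \<open>T_r: bilinear extension of the four given partial products
  x \<star> y, x \<star> b*, a* \<star> y, a* \<star> b*\<close>
definition Tr_mul :: "('n::finite \<Rightarrow> 'n \<Rightarrow> 'n \<Rightarrow> 'k::field) \<Rightarrow> ('n \<Rightarrow> 'n \<Rightarrow> 'n \<Rightarrow> 'k)
    \<Rightarrow> ('n \<Rightarrow> 'n \<Rightarrow> 'k) \<Rightarrow> ('n,'k) dsum \<Rightarrow> ('n,'k) dsum \<Rightarrow> ('n,'k) dsum" where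
  "Tr_mul Pr Su r u v = (case u of (x, a) \<Rightarrow> case v of (y, b) \<Rightarrow>
      ((\<lambda>i. amul Pr Su x y i
           + (amul Pr Su x (rmap r b) i - rmap r (Rstar Pr x b) i)
           + (amul Pr Su (rmap r a) y i - rmap r (Lstar Su y a) i)),
       (\<lambda>i. Rstar Pr x b i + Lstar Su y a i
           + (Rstar Pr (rmap r a) b i + Lstar Su (rmap r b) a i))))"

definition omega :: "('n::finite,'k::field) dsum \<Rightarrow> ('n,'k) dsum \<Rightarrow> 'k" where
  "omega u v = (case u of (x, a) \<Rightarrow> case v of (y, b) \<Rightarrow> - pairing b x + pairing a y)"

definition assoc_alg :: "(('n,'k) dsum \<Rightarrow> ('n,'k) dsum \<Rightarrow> ('n,'k) dsum) \<Rightarrow> bool" where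
  "assoc_alg m \<longleftrightarrow> (\<forall>u v w. m (m u v) w = m u (m v w))"

definition plinear :: "(('n,'k::field) dsum \<Rightarrow> ('n,'k) dsum) \<Rightarrow> bool" where
  "plinear f \<longleftrightarrow> (\<forall>u v. f (padd u v) = padd (f u) (f v)) \<and> (\<forall>c u. f (pscale c u) = pscale c (f u))"

definition connes_cocycle :: "(('n,'k::field) dsum \<Rightarrow> ('n,'k) dsum \<Rightarrow> ('n,'k) dsum)
    \<Rightarrow> (('n,'k) dsum \<Rightarrow> ('n,'k) dsum \<Rightarrow> 'k) \<Rightarrow> bool" where
  "connes_cocycle m w \<longleftrightarrow>
     (\<forall>u v z. w (padd u v) z = w u z + w v z) \<and>
     (\<forall>c u z. w (pscale c u) z = c * w u z) \<and>
     (\<forall>u z v. w u (padd z v) = w u z + w u v) \<and>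
     (\<forall>c u z. w u (pscale c z) = c * w u z) \<and>
     (\<forall>u v. w u v = - w v u) \<and>
     (\<forall>u v z. w (m u v) z + w (m v z) u + w (m z u) v = 0)"

definition alg_iso :: "(('n,'k::field) dsum \<Rightarrow> ('n,'k) dsum \<Rightarrow> ('n,'k) dsum)
    \<Rightarrow> (('n,'k) dsum \<Rightarrow> ('n,'k) dsum \<Rightarrow> ('n,'k) dsum) \<Rightarrow> (('n,'k) dsum \<Rightarrow> ('n,'k) dsum) \<Rightarrow> bool" where
  "alg_iso m1 m2 f \<longleftrightarrow> bij f \<and> plinear f \<and> (\<forall>u v. f (m1 u v) = m2 (f u) (f v))"

end

theory Submission imports Defs begin

(*
  Write T = A \<oplus> A\<^sup>* and let \<phi>(x, \<xi>) = (x - r(\<xi>), \<xi>), an invertible linear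
  map of T with inverse (x, \<xi>) \<mapsto> (x + r(\<xi>), \<xi>).
  (1) Since the products are given by structure constants, adjunction for the pairing
      turns the three dendriform axioms into: the product x*y is associative, R\<^sub>\<prec>\<^sup>* is a
      right and L\<^sub>\<succ>\<^sup>* a left action of A on A\<^sup>*, and the two actions commute.  Hence the
      semidirect product is associative; adjunction also gives the cyclic identity for \<omega>.
  (2) Contracting the D-equation with \<xi> \<otimes> \<eta> and using the symmetry of r yields its
      operator form  r(\<xi>) * r(\<eta>) = r(R\<^sub>\<prec>\<^sup>*(r \<xi>) \<eta> + L\<^sub>\<succ>\<^sup>*(r \<eta>) \<xi>).
  (3) With (2), a direct computation shows that the product of T_r is the semidirect
      product conjugated by \<phi>; symmetry of r makes \<phi> preserve \<omega>.
  (4) Associativity and the Connes cocycle property are invariant under transport of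
      structure along an \<omega>-preserving bijection, which gives the theorem with \<phi> as the
      required isomorphism.
*)

lemma bv_mult: "bv a i * t = (if i = a then t else 0)" "t * bv a i = (if i = a then t else 0)"
  by (auto simp: bv_def)

lemma if0_mult: "(if Q then t else 0) * s = (if Q then t * s else (0::'a::field))"
  by auto

lemma sum_if_const: "(\<Sum>j\<in>A. if Q then f j else 0) = (if Q then sum f A else 0)"
  by auto

lemmas bv_simps = bv_mult if0_mult sum_if_const sum.delta sum.delta'

lemma bmul_bv1: "bmul P (bv a) y k = (\<Sum>j\<in>UNIV. y j * P a j k)"
  by (simp add: bmul_def mult.assoc bv_simps)

lemma bmul_bv2: "bmul P x (bv c) k = (\<Sum>i\<in>UNIV. x i * P i c k)"
  by (simp add: bmul_def mult.assoc bv_simps)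

lemma bmul_bv_bv: "bmul P (bv a) (bv c) k = P a c k"
  by (simp add: bmul_bv1 bv_mult sum.delta')

lemma amul_bv_bv: "amul P S (bv a) (bv c) p = P a c p + S a c p"
  by (simp add: amul_def bmul_bv_bv)

lemma pairing_bv: "pairing c (bv j) = c j"
  by (simp add: pairing_def bv_mult sum.delta')

lemma covector_eqI: "(\<And>w. pairing c w = pairing d w) \<Longrightarrow> c = d"
  by (metis pairing_bv ext)

lemma pairing_add1: "pairing (\<lambda>k. u k + v k) a = pairing u a + pairing v a"
  by (simp add: pairing_def distrib_right sum.distrib)
lemma pairing_add2: "pairing a (\<lambda>k. u k + v k) = pairing a u + pairing a v"
  by (simp add: pairing_def distrib_left sum.distrib)
lemma pairing_diff2: "pairing a (\<lambda>k. u k - v k) = pairing a u - pairing a v"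
  by (simp add: pairing_def right_diff_distrib sum_subtractf)
lemma pairing_scale1: "pairing (\<lambda>k. c * u k) a = c * pairing u a"
  by (simp add: pairing_def sum_distrib_left mult_ac)
lemma pairing_scale2: "pairing a (\<lambda>k. c * u k) = c * pairing a u"
  by (simp add: pairing_def sum_distrib_left mult_ac)
lemma pairing_amul: "pairing c (amul P S x y) = pairing c (bmul P x y) + pairing c (bmul S x y)"
  unfolding amul_def by (rule pairing_add2)

lemma bmul_add1: "bmul P (\<lambda>i. x i + y i) z = (\<lambda>k. bmul P x z k + bmul P y z k)"
  by (simp add: bmul_def distrib_right sum.distrib)
lemma bmul_add2: "bmul P z (\<lambda>i. x i + y i) = (\<lambda>k. bmul P z x k + bmul P z y k)"
  by (simp add: bmul_def distrib_left distrib_right sum.distrib)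
lemma amul_add1: "amul P S (\<lambda>i. x i + y i) z = (\<lambda>k. amul P S x z k + amul P S y z k)"
  by (simp add: amul_def bmul_add1 add_ac)
lemma amul_add2: "amul P S z (\<lambda>i. x i + y i) = (\<lambda>k. amul P S z x k + amul P S z y k)"
  by (simp add: amul_def bmul_add2 add_ac)

lemma rmap_add: "rmap r (\<lambda>i. a i + b i) = (\<lambda>i. rmap r a i + rmap r b i)"
  by (simp add: rmap_def distrib_left sum.distrib)
lemma rmap_scale: "rmap r (\<lambda>i. c * a i) = (\<lambda>i. c * rmap r a i)"
  by (simp add: rmap_def sum_distrib_left mult_ac)

lemma Rstar_add1: "Rstar P (\<lambda>i. x i + y i) b = (\<lambda>j. Rstar P x b j + Rstar P y b j)"
  by (simp add: Rstar_def bmul_add2 pairing_add2)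
lemma Rstar_add2: "Rstar P x (\<lambda>i. a i + b i) = (\<lambda>j. Rstar P x a j + Rstar P x b j)"
  by (simp add: Rstar_def pairing_add1)
lemma Lstar_add1: "Lstar P (\<lambda>i. x i + y i) b = (\<lambda>j. Lstar P x b j + Lstar P y b j)"
  by (simp add: Lstar_def bmul_add1 pairing_add2)
lemma Lstar_add2: "Lstar P x (\<lambda>i. a i + b i) = (\<lambda>j. Lstar P x a j + Lstar P x b j)"
  by (simp add: Lstar_def pairing_add1)

lemma sum_swap_inner:
  "(\<Sum>i\<in>A. \<Sum>j\<in>B. \<Sum>k\<in>C. g i j k) = (\<Sum>i\<in>A. \<Sum>k\<in>C. \<Sum>j\<in>B. g i j k)"
  by (rule sum.cong[OF refl], rule sum.swap)

lemma sum_swap_inner2: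
  "(\<Sum>h\<in>E. \<Sum>i\<in>A. \<Sum>j\<in>B. \<Sum>k\<in>C. g h i j k) = (\<Sum>h\<in>E. \<Sum>i\<in>A. \<Sum>k\<in>C. \<Sum>j\<in>B. g h i j k)"
  by (rule sum.cong[OF refl], rule sum_swap_inner)

lemma sum_swap_pairs:
  "(\<Sum>i\<in>A. \<Sum>j\<in>B. \<Sum>q\<in>C. \<Sum>s\<in>D. f i j q s) = (\<Sum>q\<in>C. \<Sum>s\<in>D. \<Sum>i\<in>A. \<Sum>j\<in>B. f i j q s)"
proof -
  have "(\<Sum>i\<in>A. \<Sum>j\<in>B. \<Sum>q\<in>C. \<Sum>s\<in>D. f i j q s) = (\<Sum>i\<in>A. \<Sum>q\<in>C. \<Sum>j\<in>B. \<Sum>s\<in>D. f i j q s)"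
    by (rule sum_swap_inner)
  also have "\<dots> = (\<Sum>i\<in>A. \<Sum>q\<in>C. \<Sum>s\<in>D. \<Sum>j\<in>B. f i j q s)"
    by (rule sum_swap_inner2)
  also have "\<dots> = (\<Sum>q\<in>C. \<Sum>s\<in>D. \<Sum>i\<in>A. \<Sum>j\<in>B. f i j q s)"
    by (subst sum.swap) (rule sum_swap_inner)
  finally show ?thesis .
qed

lemma Rstar_adj: "pairing (Rstar P y c) w = pairing c (bmul P w y)"
proof -
  have "pairing (Rstar P y c) w = (\<Sum>i\<in>UNIV. \<Sum>k\<in>UNIV. \<Sum>j\<in>UNIV. c k * (w i * y j * P i j k))"
    by (simp add: pairing_def Rstar_def bmul_bv1 sum_distrib_left sum_distrib_right mult_ac)
  also have "\<dots> = (\<Sum>k\<in>UNIV. \<Sum>i\<in>UNIV. \<Sum>j\<in>UNIV. c k * (w i * y j * P i j k))"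
    by (rule sum.swap)
  finally show ?thesis
    by (simp add: pairing_def bmul_def sum_distrib_left)
qed

lemma Lstar_adj: "pairing (Lstar P y c) w = pairing c (bmul P y w)"
proof -
  have "pairing (Lstar P y c) w = (\<Sum>j\<in>UNIV. \<Sum>k\<in>UNIV. \<Sum>i\<in>UNIV. c k * (y i * w j * P i j k))"
    by (simp add: pairing_def Lstar_def bmul_bv2 sum_distrib_left sum_distrib_right mult_ac)
  also have "\<dots> = (\<Sum>k\<in>UNIV. \<Sum>i\<in>UNIV. \<Sum>j\<in>UNIV. c k * (y i * w j * P i j k))"
    by (subst sum.swap) (rule sum_swap_inner)
  finally show ?thesis
    by (simp add: pairing_def bmul_def sum_distrib_left)
qed

lemma amul_assoc:
  assumes "dendriform P S"
  shows "amul P S (amul P S x y) z = amul P S x (amul P S y z)"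
proof -
  from assms have d1: "bmul P (bmul P x y) z = bmul P x (amul P S y z)"
    and d2: "bmul P (bmul S x y) z = bmul S x (bmul P y z)"
    and d3: "bmul S (amul P S x y) z = bmul S x (bmul S y z)"
    unfolding dendriform_def by metis+
  have "amul P S (amul P S x y) z
      = (\<lambda>k. bmul P (bmul P x y) z k + bmul P (bmul S x y) z k + bmul S (amul P S x y) z k)"
    by (simp add: amul_def bmul_add1 add.assoc)
  also have "\<dots> = (\<lambda>k. bmul P x (amul P S y z) k + bmul S x (bmul P y z) k + bmul S x (bmul S y z) k)"
    by (simp only: d1 d2 d3)
  also have "\<dots> = amul P S x (amul P S y z)"
    by (simp add: amul_def bmul_add2 add.assoc)
  finally show ?thesis .
qed

text \<open>R_\<prec>^* is a right and L_\<succ>^* a left action of (A,*) on A*, and the two commute: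
  the dual statements of the three dendriform axioms.\<close>

lemma Rstar_amul:
  assumes "dendriform P S"
  shows "Rstar P (amul P S x y) c = Rstar P x (Rstar P y c)"
  by (rule covector_eqI) (use assms in \<open>simp add: Rstar_adj dendriform_def\<close>)

lemma Lstar_amul:
  assumes "dendriform P S"
  shows "Lstar S z (Lstar S y a) = Lstar S (amul P S y z) a"
  by (rule covector_eqI) (use assms in \<open>simp add: Lstar_adj dendriform_def\<close>)

lemma Lstar_Rstar_commute:
  assumes "dendriform P S"
  shows "Lstar S z (Rstar P x b) = Rstar P x (Lstar S z b)"
  by (rule covector_eqI) (use assms in \<open>simp add: Lstar_adj Rstar_adj dendriform_def\<close>)

lemma sd_mul_assoc:
  assumes "dendriform P S"
  shows "assoc_alg (sd_mul P S)"
  unfolding assoc_alg_def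
proof (intro allI)
  fix u v w :: "('a,'b) dsum"
  obtain x a y b z c where "u = (x, a)" "v = (y, b)" "w = (z, c)" by (metis surj_pair)
  then show "sd_mul P S (sd_mul P S u v) w = sd_mul P S u (sd_mul P S v w)"
    by (simp add: sd_mul_def amul_assoc[OF assms] Rstar_amul[OF assms] Lstar_amul[OF assms]
        Lstar_Rstar_commute[OF assms] Rstar_add2 Lstar_add2 add_ac)
qed

text \<open>The cyclic identity of \<omega> for the semidirect product; it holds for any pair of
  products, since it only uses the adjunctions.\<close>

lemma sd_mul_omega_cyclic:
  "omega (sd_mul P S u v) z + omega (sd_mul P S v z) u + omega (sd_mul P S z u) v = 0"
proof -
  obtain x a y b w c where "u = (x, a)" "v = (y, b)" "z = (w, c)" by (metis surj_pair)
  then show ?thesis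
    by (simp add: sd_mul_def omega_def pairing_add1 pairing_amul Rstar_adj Lstar_adj)
qed

text \<open>\<omega> is bilinear and antisymmetric, so being a Connes cocycle for \<omega> is just the cyclic identity.\<close>

lemma connes_cocycle_omega_iff:
  "connes_cocycle m omega \<longleftrightarrow>
     (\<forall>u v z. omega (m u v) z + omega (m v z) u + omega (m z u) v = 0)"
  unfolding connes_cocycle_def
  by (auto simp: omega_def padd_def pscale_def pairing_add1 pairing_add2 pairing_scale1
      pairing_scale2 algebra_simps split: prod.splits)

lemma assoc_alg_transport:
  assumes gf: "\<And>u. g (f u) = u" and m2: "\<And>u v. m2 u v = f (m1 (g u) (g v))"
    and "assoc_alg m1"
  shows "assoc_alg m2"
  using assms(3) unfolding assoc_alg_def m2 gf by metis

lemma connes_cocycle_omega_transport: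
  assumes gf: "\<And>u. g (f u) = u" and fg: "\<And>u. f (g u) = u"
    and m2: "\<And>u v. m2 u v = f (m1 (g u) (g v))"
    and f_omega: "\<And>u v. omega (f u) (f v) = omega u v"
    and "connes_cocycle m1 omega"
  shows "connes_cocycle m2 omega"
  unfolding connes_cocycle_omega_iff
proof (intro allI)
  fix u v z
  have transfer: "omega (m2 u v) z = omega (m1 (g u) (g v)) (g z)" for u v z
    by (metis m2 fg f_omega)
  have "omega (m1 (g u) (g v)) (g z) + omega (m1 (g v) (g z)) (g u) + omega (m1 (g z) (g u)) (g v) = 0"
    using assms(5) unfolding connes_cocycle_omega_iff by blast
  then show "omega (m2 u v) z + omega (m2 v z) u + omega (m2 z u) v = 0"
    by (simp only: transfer)
qed

section \<open>The D-equation in operator form\<close>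

text \<open>Contracting each of the three tensors of the D-equation with a* \<otimes> b* in the second
  and third legs.  The second contraction uses the symmetry of r.\<close>

lemma contract_r12_mul_r13:
  "(\<Sum>q\<in>UNIV. \<Sum>s\<in>UNIV. a q * b s * r12_mul_r13 P S r p q s) = amul P S (rmap r a) (rmap r b) p"
proof -
  have "amul P S (rmap r a) (rmap r b) p =
     (\<Sum>i\<in>UNIV. \<Sum>j\<in>UNIV. \<Sum>s\<in>UNIV. \<Sum>q\<in>UNIV. a q * b s * (r i q * r j s * (P i j p + S i j p)))"
    by (simp add: amul_def bmul_def rmap_def sum_distrib_left sum_distrib_right
        sum.distrib[symmetric] algebra_simps)
  also have "\<dots> = (\<Sum>i\<in>UNIV. \<Sum>j\<in>UNIV. \<Sum>q\<in>UNIV. \<Sum>s\<in>UNIV. a q * b s * (r i q * r j s * (P i j p + S i j p)))"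
    by (rule sum_swap_inner2)
  also have "\<dots> = (\<Sum>q\<in>UNIV. \<Sum>s\<in>UNIV. \<Sum>i\<in>UNIV. \<Sum>j\<in>UNIV. a q * b s * (r i q * r j s * (P i j p + S i j p)))"
    by (rule sum_swap_pairs)
  finally show ?thesis
    by (simp add: r12_mul_r13_def amul_bv_bv sum_distrib_left)
qed

lemma contract_r13_prec_r23:
  assumes "symmetric_tensor r"
  shows "(\<Sum>q\<in>UNIV. \<Sum>s\<in>UNIV. a q * b s * r13_prec_r23 P r p q s) = rmap r (Rstar P (rmap r a) b) p"
proof -
  have "(\<Sum>q\<in>UNIV. \<Sum>s\<in>UNIV. a q * b s * r13_prec_r23 P r p q s) =
     (\<Sum>q\<in>UNIV. \<Sum>s\<in>UNIV. \<Sum>j\<in>UNIV. \<Sum>d\<in>UNIV. a q * b s * (r p j * r d q * P j d s))"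
    using assms by (simp add: r13_prec_r23_def bmul_bv_bv sum_distrib_left symmetric_tensor_def mult_ac)
  also have "\<dots> = (\<Sum>j\<in>UNIV. \<Sum>d\<in>UNIV. \<Sum>q\<in>UNIV. \<Sum>s\<in>UNIV. a q * b s * (r p j * r d q * P j d s))"
    by (rule sum_swap_pairs[symmetric])
  also have "\<dots> = (\<Sum>j\<in>UNIV. \<Sum>d\<in>UNIV. \<Sum>s\<in>UNIV. \<Sum>q\<in>UNIV. a q * b s * (r p j * r d q * P j d s))"
    by (rule sum_swap_inner2)
  also have "\<dots> = (\<Sum>j\<in>UNIV. \<Sum>s\<in>UNIV. \<Sum>d\<in>UNIV. \<Sum>q\<in>UNIV. a q * b s * (r p j * r d q * P j d s))"
    by (rule sum_swap_inner)
  finally show ?thesis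
    by (simp add: rmap_def Rstar_def pairing_def bmul_bv1 sum_distrib_left sum_distrib_right mult_ac)
qed

lemma contract_r23_succ_r12:
  "(\<Sum>q\<in>UNIV. \<Sum>s\<in>UNIV. a q * b s * r23_succ_r12 S r p q s) = rmap r (Lstar S (rmap r b) a) p"
proof -
  have "(\<Sum>q\<in>UNIV. \<Sum>s\<in>UNIV. a q * b s * r23_succ_r12 S r p q s) =
     (\<Sum>q\<in>UNIV. \<Sum>s\<in>UNIV. \<Sum>i\<in>UNIV. \<Sum>j\<in>UNIV. a q * b s * (r i s * r p j * S i j q))"
    by (simp add: r23_succ_r12_def bmul_bv_bv sum_distrib_left mult_ac)
  also have "\<dots> = (\<Sum>i\<in>UNIV. \<Sum>j\<in>UNIV. \<Sum>q\<in>UNIV. \<Sum>s\<in>UNIV. a q * b s * (r i s * r p j * S i j q))"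
    by (rule sum_swap_pairs[symmetric])
  also have "\<dots> = (\<Sum>j\<in>UNIV. \<Sum>q\<in>UNIV. \<Sum>i\<in>UNIV. \<Sum>s\<in>UNIV. a q * b s * (r i s * r p j * S i j q))"
    by (subst sum.swap) (rule sum_swap_inner)
  finally show ?thesis
    by (simp add: rmap_def Lstar_def pairing_def bmul_bv2 sum_distrib_left sum_distrib_right mult_ac)
qed

lemma D_equation_operator_form:
  assumes "symmetric_tensor r" and "D_equation P S r"
  shows "amul P S (rmap r a) (rmap r b) p
       = rmap r (Rstar P (rmap r a) b) p + rmap r (Lstar S (rmap r b) a) p"
proof -
  have "amul P S (rmap r a) (rmap r b) p = (\<Sum>q\<in>UNIV. \<Sum>s\<in>UNIV. a q * b s * r12_mul_r13 P S r p q s)"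
    by (rule contract_r12_mul_r13[symmetric])
  also have "\<dots> = (\<Sum>q\<in>UNIV. \<Sum>s\<in>UNIV. a q * b s * r13_prec_r23 P r p q s)
       + (\<Sum>q\<in>UNIV. \<Sum>s\<in>UNIV. a q * b s * r23_succ_r12 S r p q s)"
    using assms(2) by (simp add: D_equation_def distrib_left sum.distrib)
  finally show ?thesis
    by (simp only: contract_r13_prec_r23[OF assms(1)] contract_r23_succ_r12)
qed

section \<open>T_r as the transport of A \<ltimes> A* along \<phi>\<close>

definition phi :: "('n::finite \<Rightarrow> 'n \<Rightarrow> 'k::field) \<Rightarrow> ('n,'k) dsum \<Rightarrow> ('n,'k) dsum" where
  "phi r u = ((\<lambda>i. fst u i - rmap r (snd u) i), snd u)"

definition phi_inv :: "('n::finite \<Rightarrow> 'n \<Rightarrow> 'k::field) \<Rightarrow> ('n,'k) dsum \<Rightarrow> ('n,'k) dsum" where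
  "phi_inv r u = ((\<lambda>i. fst u i + rmap r (snd u) i), snd u)"

lemma phi_inv_phi: "phi_inv r (phi r u) = u"
  by (simp add: phi_inv_def phi_def)

lemma phi_phi_inv: "phi r (phi_inv r u) = u"
  by (simp add: phi_inv_def phi_def)

lemma phi_bij: "bij (phi r)"
  by (rule o_bij[where g = "phi_inv r"]) (auto simp: fun_eq_iff phi_inv_phi phi_phi_inv)

lemma phi_plinear: "plinear (phi r)"
  by (auto simp: plinear_def phi_def padd_def pscale_def rmap_add rmap_scale algebra_simps)

text \<open>For symmetric r the bilinear form \<langle>b*, r(a*)\<rangle> is symmetric, hence \<phi> preserves \<omega>.\<close>

lemma pairing_rmap_sym:
  assumes "symmetric_tensor r"
  shows "pairing b (rmap r a) = pairing a (rmap r b)"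
proof -
  have "pairing b (rmap r a) = (\<Sum>i\<in>UNIV. \<Sum>j\<in>UNIV. b i * r i j * a j)"
    by (simp add: pairing_def rmap_def sum_distrib_left mult_ac)
  also have "\<dots> = (\<Sum>j\<in>UNIV. \<Sum>i\<in>UNIV. b i * r i j * a j)"
    by (rule sum.swap)
  finally show ?thesis
    using assms by (simp add: pairing_def rmap_def sum_distrib_left mult_ac symmetric_tensor_def)
qed

lemma omega_phi:
  assumes "symmetric_tensor r"
  shows "omega (phi r u) (phi r v) = omega u v"
  using pairing_rmap_sym[OF assms, of "snd v" "snd u"]
  by (cases u; cases v; simp add: omega_def phi_def pairing_diff2)

lemma Tr_mul_conj:
  assumes "symmetric_tensor r" and "D_equation P S r"
  shows "Tr_mul P S r u v = phi r (sd_mul P S (phi_inv r u) (phi_inv r v))"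
proof -
  obtain x a y b where "u = (x, a)" "v = (y, b)" by (metis surj_pair)
  then show ?thesis
    using D_equation_operator_form[OF assms, of a b]
    by (simp add: Tr_mul_def sd_mul_def phi_inv_def phi_def amul_add1 amul_add2
        Rstar_add1 Lstar_add1 rmap_add fun_eq_iff algebra_simps)
qed

theorem theorem4p4p16:
  fixes Pr Su :: "'n::finite \<Rightarrow> 'n \<Rightarrow> 'n \<Rightarrow> 'k::field"
    and r :: "'n \<Rightarrow> 'n \<Rightarrow> 'k"
  assumes "dendriform Pr Su"
    and "symmetric_tensor r"
    and "D_equation Pr Su r"
  shows "assoc_alg (sd_mul Pr Su) \<and> assoc_alg (Tr_mul Pr Su r)
       \<and> connes_cocycle (sd_mul Pr Su) omega \<and> connes_cocycle (Tr_mul Pr Su r) omega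
       \<and> (\<exists>\<phi>. alg_iso (sd_mul Pr Su) (Tr_mul Pr Su r) \<phi>
              \<and> (\<forall>u v. omega (\<phi> u) (\<phi> v) = omega u v))"
proof -
  note conj = Tr_mul_conj[OF assms(2,3)]
  have sd_assoc: "assoc_alg (sd_mul Pr Su)"
    using assms(1) by (rule sd_mul_assoc)
  have sd_cocycle: "connes_cocycle (sd_mul Pr Su) omega"
    by (simp add: connes_cocycle_omega_iff sd_mul_omega_cyclic)
  have "assoc_alg (Tr_mul Pr Su r)"
    by (rule assoc_alg_transport[OF phi_inv_phi conj sd_assoc])
  moreover have "connes_cocycle (Tr_mul Pr Su r) omega"
    by (rule connes_cocycle_omega_transport[OF phi_inv_phi phi_phi_inv conj
          omega_phi[OF assms(2)] sd_cocycle])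
  moreover have "alg_iso (sd_mul Pr Su) (Tr_mul Pr Su r) (phi r)"
    by (simp add: alg_iso_def phi_bij phi_plinear conj phi_inv_phi)
  ultimately show ?thesis
    using sd_assoc sd_cocycle omega_phi[OF assms(2)] by blast
qed

end
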